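(* Consider the protocol $P_{RL}$ with parameter $N$ on a directed ring of size $n$ with $2\le n\le N$. Let $\mathcal{S}_{RL}$ be the set of configurations in $\mathcal{C}_{NI}$ (defined in the context) in which exactly one agent is a leader. Then $\mathcal{S}_{RL}$ is closed (no configuration outside $\mathcal{S}_{RL}$ is reachable from a configuration in $\mathcal{S}_{RL}$), and every configuration in $\mathcal{S}_{RL}$ is safe.
   Context: Model. A population is a directed ring of $n\ge 2$ anonymous agents $u_0,\dots,u_{n-1}$ (indices modulo $n$) with arcs $e_i=(u_i,u_{i+1})$. A configuration $C$ assigns a state to each agent; $C\to C'$ means that $C'$ is obtained from $C$ by one interaction on some arc $e_i$, in which initiator $u_i$ and responder $u_{i+1}$ update their states by the transition function and all other agents keep their states. A configuration is reachable from $C$ if it is obtained from $C$ by finitely many such steps. A configuration $C$ is safe if (i) exactly one agent outputs $L$ and all others output $F$ in $C$, and (ii) in every configuration reachable from $C$ each agent has the same output as in $C$. Protocol $P_{RL}$ (parameter $N$). Each agent has variables $\mathit{leader}\in\{0,1\}$, $\mathit{bullet}\in\{0,1,2\}$, $\mathit{shield}\in\{0,1\}$, $\mathit{signal}\in\{0,1\}$, $\mathit{dist}\in\{0,\dots,N\}$; it outputs $L$ if $\mathit{leader}=1$ (leader) and $F$ otherwise (follower). In an interaction with initiator $l$ and responder $r$ the following are executed in order: 1. If $l.\mathit{leader}=1$ then $l.\mathit{dist}\gets 0$. 2. If $r.\mathit{leader}=1$ then $r.\mathit{dist}\gets 0$; else if $r.\mathit{bullet}=0$ then $r.\mathit{dist}\gets\min(l.\mathit{dist}+1,N)$.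 3. If $r.\mathit{dist}=N$ then $r.\mathit{leader}\gets1$, $r.\mathit{bullet}\gets2$, $r.\mathit{shield}\gets1$, $r.\mathit{signal}\gets0$, $r.\mathit{dist}\gets0$. 4. If $l.\mathit{leader}=1$ and $l.\mathit{signal}=1$ then $l.\mathit{bullet}\gets2$, $l.\mathit{shield}\gets1$, $l.\mathit{signal}\gets0$. 5. If $r.\mathit{leader}=1$ and $r.\mathit{signal}=1$ then $r.\mathit{bullet}\gets1$, $r.\mathit{shield}\gets0$, $r.\mathit{signal}\gets0$. 6. If $l.\mathit{bullet}>0$ and $r.\mathit{leader}=1$: set $r.\mathit{leader}\gets0$ if ($l.\mathit{bullet}=2$ and $r.\mathit{shield}=0$); then $l.\mathit{bullet}\gets0$. Else, if $l.\mathit{bullet}>0$ and $r.\mathit{leader}=0$: if $r.\mathit{bullet}=0$ then $r.\mathit{bullet}\gets l.\mathit{bullet}$; then $l.\mathit{bullet}\gets0$ and $r.\mathit{signal}\gets0$. 7. $l.\mathit{signal}\gets\max(l.\mathit{signal},r.\mathit{signal},r.\mathit{leader})$. Definitions (in a configuration with at least one leader). $\mathrm{dist}_L(i)=\min\{j\ge0: u_{i-j}.\mathit{leader}=1\}$ and $\mathrm{dist}_R(i)=\min\{j\ge0: u_{i+j}.\mathit{leader}=1\}$. $\mathrm{peaceful}(i)$ holds iff $u_{i-\mathrm{dist}_L(i)}.\mathit{shield}=1$ and $u_{i-j}.\mathit{signal}=0$ for all $0\le j\le\mathrm{dist}_L(i)$. $\mathrm{modest}(i)$ holds iff $\mathrm{peaceful}(i)$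 holds and $u_{i-j}.\mathit{dist}\le\mathrm{dist}_L(i-j)$ for all $0\le j\le\mathrm{dist}_L(i)$. $\mathrm{secure}(i)$ holds iff $u_i.\mathit{dist}=0$ when $u_i.\mathit{leader}=1$, and $u_i.\mathit{dist}\le N-\mathrm{dist}_R(i)$ when $u_i.\mathit{leader}=0$. $\mathcal{C}_{PB}$ is the set of configurations with at least one leader in which every $u_j$ with $u_j.\mathit{bullet}=2$ satisfies $\mathrm{peaceful}(j)$. $\mathcal{C}_{NI}$ is the set of configurations in $\mathcal{C}_{PB}$ in which every agent $u_i$ satisfies $\mathrm{secure}(i)$ and every $u_j$ with $u_j.\mathit{bullet}=2$ satisfies $\mathrm{modest}(j)$. *)

theory Defs
  imports Main
begin

text \<open>State of an agent of protocol P_RL. leader, shield, signal are 0/1 flags,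
  rendered as booleans (1 = True). bullet ranges over {0,1,2} and dist over {0..N};
  the range constraints are imposed by valid_state.\<close>

record agent =
  leader :: bool
  bullet :: nat
  shield :: bool
  signal :: bool
  dist   :: nat

definition valid_state :: "nat \<Rightarrow> agent \<Rightarrow> bool" where
  "valid_state N s \<longleftrightarrow> bullet s \<le> 2 \<and> dist s \<le> N"

text \<open>A configuration of a ring of size n: agent u_i is C i for i < n
  (values at indices \<ge> n are irrelevant).\<close>
type_synonym config = "nat \<Rightarrow> agent"

definition valid_config :: "nat \<Rightarrow> nat \<Rightarrow> config \<Rightarrow> bool" where
  "valid_config n N C \<longleftrightarrow> (\<forall>i<n. valid_state N (C i))"

definition step1 :: "agent \<times> agent \<Rightarrow> agent \<times> agent" where
  "step1 = (\<lambda>(l, r). (if leader l then l\<lparr>dist := 0\<rparr> else l, r))"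

definition step2 :: "nat \<Rightarrow> agent \<times> agent \<Rightarrow> agent \<times> agent" where
  "step2 N = (\<lambda>(l, r).
     (l, if leader r then r\<lparr>dist := 0\<rparr>
         else if bullet r = 0 then r\<lparr>dist := min (dist l + 1) N\<rparr> else r))"

definition step3 :: "nat \<Rightarrow> agent \<times> agent \<Rightarrow> agent \<times> agent" where
  "step3 N = (\<lambda>(l, r).
     (l, if dist r = N then r\<lparr>leader := True, bullet := 2, shield := True,
                               signal := False, dist := 0\<rparr> else r))"

definition step4 :: "agent \<times> agent \<Rightarrow> agent \<times> agent" where
  "step4 = (\<lambda>(l, r).
     (if leader l \<and> signal l then l\<lparr>bullet := 2, shield := True, signal := False\<rparr> else l, r))"

definition step5 :: "agent \<times> agent \<Rightarrow> agent \<times> agent" where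
  "step5 = (\<lambda>(l, r).
     (l, if leader r \<and> signal r then r\<lparr>bullet := 1, shield := False, signal := False\<rparr> else r))"

definition step6 :: "agent \<times> agent \<Rightarrow> agent \<times> agent" where
  "step6 = (\<lambda>(l, r).
     if bullet l > 0 \<and> leader r then
       (l\<lparr>bullet := 0\<rparr>,
        if bullet l = 2 \<and> \<not> shield r then r\<lparr>leader := False\<rparr> else r)
     else if bullet l > 0 \<and> \<not> leader r then
       (l\<lparr>bullet := 0\<rparr>,
        (if bullet r = 0 then r\<lparr>bullet := bullet l\<rparr> else r)\<lparr>signal := False\<rparr>)
     else (l, r))"

definition step7 :: "agent \<times> agent \<Rightarrow> agent \<times> agent" where
  "step7 = (\<lambda>(l, r). (l\<lparr>signal := (signal l \<or> signal r \<or> leader r)\<rparr>, r))"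

definition delta :: "nat \<Rightarrow> agent \<Rightarrow> agent \<Rightarrow> agent \<times> agent" where
  "delta N l r = (step7 \<circ> step6 \<circ> step5 \<circ> step4 \<circ> step3 N \<circ> step2 N \<circ> step1) (l, r)"

definition ring_step :: "nat \<Rightarrow> nat \<Rightarrow> config \<Rightarrow> config \<Rightarrow> bool" where
  "ring_step n N C C' \<longleftrightarrow>
     (\<exists>i<n. C' = C(i := fst (delta N (C i) (C (Suc i mod n))),
                   Suc i mod n := snd (delta N (C i) (C (Suc i mod n)))))"

definition reachable :: "nat \<Rightarrow> nat \<Rightarrow> config \<Rightarrow> config \<Rightarrow> bool" where
  "reachable n N = (ring_step n N)\<^sup>*\<^sup>*"

definition at :: "nat \<Rightarrow> config \<Rightarrow> int \<Rightarrow> agent" where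
  "at n C k = C (nat (k mod int n))"

definition has_leader :: "nat \<Rightarrow> config \<Rightarrow> bool" where
  "has_leader n C \<longleftrightarrow> (\<exists>i<n. leader (C i))"

definition distL :: "nat \<Rightarrow> config \<Rightarrow> int \<Rightarrow> nat" where
  "distL n C i = (LEAST j. leader (at n C (i - int j)))"

definition distR :: "nat \<Rightarrow> config \<Rightarrow> int \<Rightarrow> nat" where
  "distR n C i = (LEAST j. leader (at n C (i + int j)))"

definition peaceful :: "nat \<Rightarrow> config \<Rightarrow> int \<Rightarrow> bool" where
  "peaceful n C i \<longleftrightarrow>
     shield (at n C (i - int (distL n C i))) \<and>
     (\<forall>j\<le>distL n C i. \<not> signal (at n C (i - int j)))"

definition modest :: "nat \<Rightarrow> config \<Rightarrow> int \<Rightarrow> bool" where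
  "modest n C i \<longleftrightarrow> peaceful n C i \<and>
     (\<forall>j\<le>distL n C i. dist (at n C (i - int j)) \<le> distL n C (i - int j))"

definition secure :: "nat \<Rightarrow> nat \<Rightarrow> config \<Rightarrow> int \<Rightarrow> bool" where
  "secure n N C i \<longleftrightarrow>
     (if leader (at n C i) then dist (at n C i) = 0
      else int (dist (at n C i)) \<le> int N - int (distR n C i))"

definition C_PB :: "nat \<Rightarrow> config set" where
  "C_PB n = {C. has_leader n C \<and>
     (\<forall>j<n. bullet (C j) = 2 \<longrightarrow> peaceful n C (int j))}"

definition C_NI :: "nat \<Rightarrow> nat \<Rightarrow> config set" where
  "C_NI n N = {C. C \<in> C_PB n \<and> (\<forall>i<n. secure n N C (int i)) \<and>
     (\<forall>j<n. bullet (C j) = 2 \<longrightarrow> modest n C (int j))}"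

definition S_RL :: "nat \<Rightarrow> nat \<Rightarrow> config set" where
  "S_RL n N = {C. valid_config n N C \<and> C \<in> C_NI n N \<and> card {i. i < n \<and> leader (C i)} = 1}"

definition closed_set :: "nat \<Rightarrow> nat \<Rightarrow> config set \<Rightarrow> bool" where
  "closed_set n N S \<longleftrightarrow> (\<forall>C\<in>S. \<forall>C'. reachable n N C C' \<longrightarrow> C' \<in> S)"

definition safe :: "nat \<Rightarrow> nat \<Rightarrow> config \<Rightarrow> bool" where
  "safe n N C \<longleftrightarrow> card {i. i < n \<and> leader (C i)} = 1 \<and>
     (\<forall>C'. reachable n N C C' \<longrightarrow> (\<forall>i<n. leader (C' i) = leader (C i)))"

end

(*
  Rotate the ring so that the unique leader sits at position 0. In these coordinates
  membership in S_RL becomes the invariant S_RL_rooted: the follower k positions right of the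
  leader has dist <= N - (n - k) < N, and a live bullet (bullet = 2) at position k sees a
  shielded leader and, at every position j <= k, an agent without signal and with dist <= j.
  Each of the three kinds of interaction (follower to leader, leader to follower, follower
  to follower) preserves the invariant: dist grows by at most one per hop, so no follower
  reaches N and gets promoted, and a live bullet can only reach the leader while it is
  shielded, so the leader survives. Hence the set of leaders never changes.
*)

theory Submission
  imports Defs
begin

text \<open>In the three lemmas below, the hypothesis on N resp. on the responder's new dist says
  that step 3 does not promote the responder.\<close>

lemma delta_follower_leader:
  assumes "\<not> leader l" "leader r" "N \<noteq> 0" "bullet l = 2 \<longrightarrow> shield r \<and> \<not> signal r"
  shows "fst (delta N l r) = l\<lparr>bullet := 0, signal := True\<rparr>"
    and "snd (delta N l r) = r\<lparr>dist := 0, bullet := (if signal r then 1 else bullet r),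
           shield := (shield r \<and> \<not> signal r), signal := False\<rparr>"
  using assms
  by (auto simp: delta_def step1_def step2_def step3_def step4_def step5_def step6_def step7_def)

lemma delta_leader_follower:
  assumes "leader l" "\<not> leader r" "(if bullet r = 0 then min 1 N else dist r) \<noteq> N"
  shows "fst (delta N l r) = l\<lparr>bullet := 0, shield := (shield l \<or> signal l),
           signal := (\<not> signal l \<and> bullet l = 0 \<and> signal r), dist := 0\<rparr>"
    and "snd (delta N l r) = r\<lparr>bullet := (if bullet r = 0 then (if signal l then 2 else bullet l) else bullet r),
           signal := (signal r \<and> \<not> signal l \<and> bullet l = 0),
           dist := (if bullet r = 0 then min 1 N else dist r)\<rparr>"
  using assms
  by (auto simp: delta_def step1_def step2_def step3_def step4_def step5_def step6_def step7_def)

lemma delta_follower_follower: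
  assumes "\<not> leader l" "\<not> leader r" "(if bullet r = 0 then min (dist l + 1) N else dist r) \<noteq> N"
  shows "fst (delta N l r) = l\<lparr>bullet := 0, signal := (signal l \<or> (bullet l = 0 \<and> signal r))\<rparr>"
    and "snd (delta N l r) = r\<lparr>bullet := (if bullet r = 0 then bullet l else bullet r),
           signal := (signal r \<and> bullet l = 0),
           dist := (if bullet r = 0 then min (dist l + 1) N else dist r)\<rparr>"
  using assms
  by (auto simp: delta_def step1_def step2_def step3_def step4_def step5_def step6_def step7_def)

definition interaction :: "nat \<Rightarrow> nat \<Rightarrow> config \<Rightarrow> nat \<Rightarrow> config" where
  "interaction n N C i =
     C(i := fst (delta N (C i) (C (Suc i mod n))), Suc i mod n := snd (delta N (C i) (C (Suc i mod n))))"

text \<open>D k is the agent k positions to the right of the leader, so that dist_L = k and, for a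
  follower, dist_R = n - k.\<close>
definition S_RL_rooted :: "nat \<Rightarrow> nat \<Rightarrow> config \<Rightarrow> bool" where
  "S_RL_rooted n N D \<longleftrightarrow>
     (\<forall>k<n. leader (D k) \<longleftrightarrow> k = 0) \<and>
     (\<forall>k<n. bullet (D k) \<le> 2 \<and> dist (D k) \<le> N) \<and>
     dist (D 0) = 0 \<and> (\<forall>k<n. 0 < k \<longrightarrow> dist (D k) + n \<le> N + k) \<and>
     (\<forall>k<n. bullet (D k) = 2 \<longrightarrow> shield (D 0) \<and> (\<forall>j\<le>k. \<not> signal (D j) \<and> dist (D j) \<le> j))"

lemma S_RL_rootedD:
  assumes "S_RL_rooted n N D" and "k < n"
  shows "leader (D k) \<longleftrightarrow> k = 0" and "bullet (D k) \<le> 2" and "dist (D k) \<le> N"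
    and "0 < k \<Longrightarrow> dist (D k) + n \<le> N + k"
    and "bullet (D k) = 2 \<Longrightarrow> shield (D 0)"
    and "bullet (D k) = 2 \<Longrightarrow> j \<le> k \<Longrightarrow> \<not> signal (D j) \<and> dist (D j) \<le> j"
  using assms unfolding S_RL_rooted_def by auto

lemma S_RL_rooted_interaction_into_leader:
  assumes D: "S_RL_rooted n N D" and n: "2 \<le> n" "n \<le> N"
  shows "S_RL_rooted n N (interaction n N D (n - 1))"
proof -
  have last: "n - 1 < n" "0 < n - 1" and wrap: "Suc (n - 1) mod n = 0" and N0: "N \<noteq> 0"
    using n by auto
  have roles: "\<not> leader (D (n - 1))" "leader (D 0)"
    using S_RL_rootedD(1)[OF D] last by auto
  have shielded: "bullet (D (n - 1)) = 2 \<longrightarrow> shield (D 0) \<and> \<not> signal (D 0)"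
    using S_RL_rootedD(5)[OF D last(1)] S_RL_rootedD(6)[OF D last(1), of 0] by simp
  have "dist (D (n - 1)) + n \<le> N + (n - 1)" "bullet (D 0) = 2 \<longrightarrow> shield (D 0)"
    using S_RL_rootedD(4)[OF D last] S_RL_rootedD(5)[OF D, of 0] n by auto
  then show ?thesis
    using D n unfolding interaction_def wrap S_RL_rooted_def
      delta_follower_leader[OF roles N0 shielded]
    by (auto simp: fun_upd_def)
qed

lemma S_RL_rooted_interaction_from_leader:
  assumes D: "S_RL_rooted n N D" and n: "2 \<le> n" "n \<le> N"
  shows "S_RL_rooted n N (interaction n N D 0)"
proof -
  have succ: "Suc 0 mod n = 1" and one: "1 < n" using n by auto
  have roles: "leader (D 0)" "\<not> leader (D 1)" using S_RL_rootedD(1)[OF D] one by auto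
  have inv: "\<And>m j. bullet (D m) = 2 \<Longrightarrow> m < n \<Longrightarrow> j \<le> m \<Longrightarrow> \<not> signal (D j) \<and> dist (D j) \<le> j"
    and shield: "\<And>m. bullet (D m) = 2 \<Longrightarrow> m < n \<Longrightarrow> shield (D 0)"
    using S_RL_rootedD(5,6)[OF D] by blast+
  have secure: "dist (D 1) + n \<le> N + 1" and shielded: "bullet (D 0) = 2 \<longrightarrow> shield (D 0)"
    using S_RL_rootedD(4)[OF D one] shield[of 0] n by auto
  from secure have no_promotion: "(if bullet (D 1) = 0 then min 1 N else dist (D 1)) \<noteq> N"
    using n by auto
  have "\<not> signal (D 0) \<and> \<not> signal (D 1) \<and> dist (D 1) \<le> 1"
    if "bullet (D m) = 2" "m < n" "1 \<le> m" for m
    using inv[of m 0] inv[of m 1] that by auto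
  moreover have "bullet (D 0) = 2 \<Longrightarrow> \<not> signal (D 0)" using inv[of 0 0] n by auto
  moreover have "bullet (D 1) = 2 \<Longrightarrow> \<not> signal (D 0) \<and> \<not> signal (D 1) \<and> dist (D 1) \<le> 1"
    using inv[of 1 0] inv[of 1 1] one by auto
  ultimately show ?thesis
    using D n secure shielded inv shield unfolding interaction_def succ S_RL_rooted_def
      delta_leader_follower[OF roles no_promotion]
    by (auto simp: fun_upd_def)
qed

lemma S_RL_rooted_interaction_between_followers:
  assumes D: "S_RL_rooted n N D" and n: "2 \<le> n" "n \<le> N" and k: "0 < k" "Suc k < n"
  shows "S_RL_rooted n N (interaction n N D k)"
proof -
  have succ: "Suc k mod n = Suc k" using k by simp
  have roles: "\<not> leader (D k)" "\<not> leader (D (Suc k))" using S_RL_rootedD(1)[OF D] k by auto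
  have inv: "\<And>m j. bullet (D m) = 2 \<Longrightarrow> m < n \<Longrightarrow> j \<le> m \<Longrightarrow> \<not> signal (D j) \<and> dist (D j) \<le> j"
    and shield: "\<And>m. bullet (D m) = 2 \<Longrightarrow> m < n \<Longrightarrow> shield (D 0)"
    using S_RL_rootedD(5,6)[OF D] by blast+
  have secure: "dist (D k) + n \<le> N + k" "dist (D (Suc k)) + n \<le> N + Suc k"
    using S_RL_rootedD(4)[OF D, of k] S_RL_rootedD(4)[OF D, of "Suc k"] k by auto
  then have no_promotion:
    "(if bullet (D (Suc k)) = 0 then min (dist (D k) + 1) N else dist (D (Suc k))) \<noteq> N"
    using n k by auto
  have "\<not> signal (D k) \<and> dist (D k) \<le> k" if "bullet (D m) = 2" "m < n" "k \<le> m" for m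
    using inv[of m k] that by auto
  moreover have "\<not> signal (D (Suc k)) \<and> dist (D (Suc k)) \<le> Suc k"
    if "bullet (D m) = 2" "m < n" "Suc k \<le> m" for m
    using inv[of m "Suc k"] that by auto
  moreover have "min (Suc (dist (D k))) N \<le> Suc k"
    if "bullet (D m) = 2" "m < n" "k \<le> m" for m
    using inv[of m k] that by auto
  moreover have "min (Suc (dist (D k))) N + n \<le> Suc (N + k)" using secure by auto
  ultimately show ?thesis
    using D n k inv shield unfolding interaction_def succ S_RL_rooted_def
      delta_follower_follower[OF roles no_promotion]
    by (auto simp: fun_upd_def)
qed

lemma S_RL_rooted_interaction:
  assumes "S_RL_rooted n N D" "2 \<le> n" "n \<le> N" "k < n"
  shows "S_RL_rooted n N (interaction n N D k)"
proof -
  consider "k = n - 1" | "k = 0" | "0 < k" "Suc k < n" using assms by linarith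
  then show ?thesis
    using S_RL_rooted_interaction_into_leader S_RL_rooted_interaction_from_leader
      S_RL_rooted_interaction_between_followers assms
    by cases metis+
qed

lemma S_RL_rooted_cong:
  assumes "0 < n" "\<And>k. k < n \<Longrightarrow> D k = D' k" "S_RL_rooted n N D"
  shows "S_RL_rooted n N D'"
  using assms unfolding S_RL_rooted_def by auto

definition rot :: "nat \<Rightarrow> nat \<Rightarrow> config \<Rightarrow> config" where
  "rot n p C = (\<lambda>k. C ((p + k) mod n))"

definition rel_pos :: "nat \<Rightarrow> nat \<Rightarrow> int \<Rightarrow> nat" where
  "rel_pos n p x = nat ((x - int p) mod int n)"

lemma rel_pos_less: "0 < n \<Longrightarrow> rel_pos n p x < n"
  unfolding rel_pos_def by (simp add: nat_less_iff)

lemma int_rel_pos: "0 < n \<Longrightarrow> int (rel_pos n p x) = (x - int p) mod int n"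
  unfolding rel_pos_def by simp

lemma int_rel_pos_add: "0 < n \<Longrightarrow> int (rel_pos n p (x + d)) = (int (rel_pos n p x) + d) mod int n"
  by (simp only: int_rel_pos mod_add_left_eq) (simp add: algebra_simps)

lemma rel_pos_add: "0 < n \<Longrightarrow> rel_pos n p x + t < n \<Longrightarrow> rel_pos n p (x + int t) = rel_pos n p x + t"
  using int_rel_pos_add[of n p x "int t"] by simp

lemma rel_pos_diff: "0 < n \<Longrightarrow> t \<le> rel_pos n p x \<Longrightarrow> rel_pos n p (x - int t) = rel_pos n p x - t"
  using int_rel_pos_add[of n p x "- int t"] rel_pos_less[of n p x] by simp

lemma rel_pos_wrap: "0 < n \<Longrightarrow> rel_pos n p (x + int (n - rel_pos n p x)) = 0"
  using int_rel_pos_add[of n p x "int (n - rel_pos n p x)"] rel_pos_less[of n p x] by simp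

lemma rel_pos_of_rot_index: "0 < n \<Longrightarrow> k < n \<Longrightarrow> rel_pos n p (int ((p + k) mod n)) = k"
  unfolding rel_pos_def by (simp add: zmod_int mod_diff_left_eq)

lemma rot_index_of_rel_pos:
  assumes "0 < n" "i < n"
  shows "(p + rel_pos n p (int i)) mod n = i"
proof -
  have "int ((p + rel_pos n p (int i)) mod n) = (int p + (int i - int p) mod int n) mod int n"
    using assms(1) by (simp add: int_rel_pos zmod_int)
  also have "\<dots> = int i"
    using assms by (simp add: mod_add_right_eq)
  finally show ?thesis by linarith
qed

lemma at_eq_rot:
  assumes "0 < n"
  shows "at n C x = rot n p C (rel_pos n p x)"
proof -
  have "int ((p + rel_pos n p x) mod n) = (int p + (x - int p) mod int n) mod int n"
    using assms by (simp add: int_rel_pos zmod_int)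
  also have "\<dots> = x mod int n"
    by (simp add: mod_add_right_eq)
  finally have "(p + rel_pos n p x) mod n = nat (x mod int n)"
    by linarith
  then show ?thesis
    unfolding at_def rot_def by simp
qed

lemma rel_pos_eq_0_iff: "i < n \<Longrightarrow> p < n \<Longrightarrow> rel_pos n p (int i) = 0 \<longleftrightarrow> i = p"
  using rot_index_of_rel_pos[of n i p] by (auto simp: rel_pos_def)

lemma all_below_iff_rot:
  assumes "0 < n"
  shows "(\<forall>i<n. P (C i) (rel_pos n p (int i))) \<longleftrightarrow> (\<forall>k<n. P (rot n p C k) k)"
proof
  assume "\<forall>i<n. P (C i) (rel_pos n p (int i))"
  then show "\<forall>k<n. P (rot n p C k) k"
    using rel_pos_of_rot_index[OF assms] assms unfolding rot_def by (metis mod_less_divisor)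
next
  assume "\<forall>k<n. P (rot n p C k) k"
  then show "\<forall>i<n. P (C i) (rel_pos n p (int i))"
    using rel_pos_less[OF assms] rot_index_of_rel_pos[OF assms] unfolding rot_def by metis
qed

context
  fixes n p :: nat and C :: config
  assumes n0: "0 < n" and rooted: "\<And>k. k < n \<Longrightarrow> leader (rot n p C k) \<longleftrightarrow> k = 0"
begin

lemma leader_at_iff: "leader (at n C x) \<longleftrightarrow> rel_pos n p x = 0"
  using at_eq_rot[OF n0] rooted rel_pos_less[OF n0] by metis

lemma distL_eq: "distL n C x = rel_pos n p x"
  unfolding distL_def leader_at_iff
proof (rule Least_equality)
  show "rel_pos n p (x - int (rel_pos n p x)) = 0"
    using rel_pos_diff[OF n0] by simp
  show "rel_pos n p x \<le> j" if "rel_pos n p (x - int j) = 0" for j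
    using that rel_pos_diff[OF n0, of j p x] by (cases "j \<le> rel_pos n p x") auto
qed

lemma distR_eq: "distR n C x = (if rel_pos n p x = 0 then 0 else n - rel_pos n p x)"
proof (cases "rel_pos n p x = 0")
  case True
  then show ?thesis unfolding distR_def leader_at_iff by simp
next
  case False
  have "(LEAST j. rel_pos n p (x + int j) = 0) = n - rel_pos n p x"
  proof (rule Least_equality)
    show "rel_pos n p (x + int (n - rel_pos n p x)) = 0"
      using rel_pos_wrap[OF n0] .
    show "n - rel_pos n p x \<le> j" if "rel_pos n p (x + int j) = 0" for j
      using that False rel_pos_add[OF n0, of p x j] by (cases "rel_pos n p x + j < n") auto
  qed
  with False show ?thesis unfolding distR_def leader_at_iff by simp
qed

lemma secure_iff:
  "secure n N C x \<longleftrightarrow>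
     (if rel_pos n p x = 0 then dist (rot n p C 0) = 0
      else dist (rot n p C (rel_pos n p x)) + n \<le> N + rel_pos n p x)"
  using rel_pos_less[OF n0, of p x] rooted[OF rel_pos_less[OF n0, of p x]] rooted[OF n0]
  unfolding secure_def leader_at_iff distR_eq at_eq_rot[OF n0, of C x p] by auto

lemma modest_iff:
  "modest n C x \<longleftrightarrow>
     shield (rot n p C 0) \<and>
     (\<forall>j\<le>rel_pos n p x. \<not> signal (rot n p C j) \<and> dist (rot n p C j) \<le> j)"
proof -
  let ?k = "rel_pos n p x"
  have steps_back: "t \<le> ?k \<Longrightarrow> rel_pos n p (x - int t) = ?k - t" for t
    using rel_pos_diff[OF n0] .
  have "modest n C x \<longleftrightarrow> shield (rot n p C 0) \<and>
      (\<forall>t\<le>?k. \<not> signal (rot n p C (?k - t)) \<and> dist (rot n p C (?k - t)) \<le> ?k - t)"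
    unfolding modest_def peaceful_def distL_eq at_eq_rot[OF n0, of C _ p] using steps_back by auto
  also have "\<dots> \<longleftrightarrow> shield (rot n p C 0) \<and>
      (\<forall>j\<le>?k. \<not> signal (rot n p C j) \<and> dist (rot n p C j) \<le> j)"
  proof -
    have "(\<forall>t\<le>?k. Q (?k - t)) \<longleftrightarrow> (\<forall>j\<le>?k. Q j)" for Q
      by (metis diff_diff_cancel diff_le_self)
    from this[of "\<lambda>j. \<not> signal (rot n p C j) \<and> dist (rot n p C j) \<le> j"] show ?thesis
      by simp
  qed
  finally show ?thesis .
qed

end

lemma S_RL_iff_rooted_at:
  assumes n0: "0 < n" and p: "p < n" and leaders: "\<And>i. i < n \<Longrightarrow> leader (C i) \<longleftrightarrow> i = p"
  shows "C \<in> S_RL n N \<longleftrightarrow> S_RL_rooted n N (rot n p C)"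
proof -
  have rooted: "leader (rot n p C k) \<longleftrightarrow> k = 0" if "k < n" for k
    using leaders[of "(p + k) mod n"] rel_pos_eq_0_iff[of "(p + k) mod n" n p]
      rel_pos_of_rot_index[OF n0 that] n0 p unfolding rot_def by auto
  have "{i. i < n \<and> leader (C i)} = {p}" and "has_leader n C"
    using leaders p unfolding has_leader_def by auto
  then have "C \<in> S_RL n N \<longleftrightarrow> valid_config n N C \<and> (\<forall>i<n. secure n N C (int i)) \<and>
      (\<forall>i<n. bullet (C i) = 2 \<longrightarrow> modest n C (int i))"
    unfolding S_RL_def C_NI_def C_PB_def modest_def by auto
  also have "\<dots> \<longleftrightarrow> (\<forall>k<n. bullet (rot n p C k) \<le> 2 \<and> dist (rot n p C k) \<le> N) \<and>
      (\<forall>k<n. if k = 0 then dist (rot n p C 0) = 0 else dist (rot n p C k) + n \<le> N + k) \<and>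
      (\<forall>k<n. bullet (rot n p C k) = 2 \<longrightarrow>
         shield (rot n p C 0) \<and> (\<forall>j\<le>k. \<not> signal (rot n p C j) \<and> dist (rot n p C j) \<le> j))"
    using all_below_iff_rot[OF n0, of "\<lambda>s _. bullet s \<le> 2 \<and> dist s \<le> N" C p]
      all_below_iff_rot[OF n0, of "\<lambda>_ k. if k = 0 then dist (rot n p C 0) = 0
        else dist (rot n p C k) + n \<le> N + k" C p]
      all_below_iff_rot[OF n0, of "\<lambda>s k. bullet s = 2 \<longrightarrow> shield (rot n p C 0) \<and>
        (\<forall>j\<le>k. \<not> signal (rot n p C j) \<and> dist (rot n p C j) \<le> j)" C p]
    by (simp only: valid_config_def valid_state_def secure_iff[OF n0 rooted] modest_iff[OF n0 rooted])
  also have "\<dots> \<longleftrightarrow> S_RL_rooted n N (rot n p C)"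
  proof -
    have "(\<forall>k<n. leader (rot n p C k) \<longleftrightarrow> k = 0) \<longleftrightarrow> True"
      using rooted by blast
    moreover have "(\<forall>k<n. if k = 0 then dist (rot n p C 0) = 0 else Q k) \<longleftrightarrow>
        dist (rot n p C 0) = 0 \<and> (\<forall>k<n. 0 < k \<longrightarrow> Q k)" for Q
      using n0 by auto
    ultimately show ?thesis
      unfolding S_RL_rooted_def by simp
  qed
  finally show ?thesis .
qed

lemma S_RL_rooted_leader_iff:
  assumes n0: "0 < n" and "p < n" "S_RL_rooted n N (rot n p C)" "i < n"
  shows "leader (C i) \<longleftrightarrow> i = p"
proof -
  have "leader (C i) \<longleftrightarrow> leader (rot n p C (rel_pos n p (int i)))"
    by (simp only: rot_def rot_index_of_rel_pos[OF n0 \<open>i < n\<close>])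
  also have "\<dots> \<longleftrightarrow> rel_pos n p (int i) = 0"
    by (rule S_RL_rootedD(1)[OF \<open>S_RL_rooted n N (rot n p C)\<close> rel_pos_less[OF n0]])
  also have "\<dots> \<longleftrightarrow> i = p"
    by (rule rel_pos_eq_0_iff[OF \<open>i < n\<close> \<open>p < n\<close>])
  finally show ?thesis .
qed

lemma S_RL_iff:
  assumes n0: "0 < n"
  shows "C \<in> S_RL n N \<longleftrightarrow> (\<exists>p<n. S_RL_rooted n N (rot n p C))"
proof
  assume S: "C \<in> S_RL n N"
  then have "card {i. i < n \<and> leader (C i)} = 1"
    unfolding S_RL_def by simp
  then obtain p where "{i. i < n \<and> leader (C i)} = {p}"
    by (rule card_1_singletonE)
  then have p: "p < n" and leaders: "\<And>i. i < n \<Longrightarrow> leader (C i) \<longleftrightarrow> i = p"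
    by auto
  show "\<exists>p<n. S_RL_rooted n N (rot n p C)"
    using S S_RL_iff_rooted_at[OF n0 p leaders] p by blast
next
  assume "\<exists>p<n. S_RL_rooted n N (rot n p C)"
  then obtain p where p: "p < n" and rooted: "S_RL_rooted n N (rot n p C)"
    by blast
  show "C \<in> S_RL n N"
    using S_RL_iff_rooted_at[OF n0 p S_RL_rooted_leader_iff[OF n0 p rooted]] rooted by blast
qed

lemma rot_interaction:
  assumes n0: "0 < n" and "i < n" "k < n"
  shows "rot n p (interaction n N C i) k = interaction n N (rot n p C) (rel_pos n p (int i)) k"
proof -
  let ?r = "rel_pos n p (int i)"
  have at_i: "(p + ?r) mod n = i"
    using rot_index_of_rel_pos[OF n0 \<open>i < n\<close>] .
  then have at_succ: "(p + Suc ?r mod n) mod n = Suc i mod n"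
    by (metis add_Suc_right mod_Suc_eq mod_add_right_eq)
  have "(p + k) mod n = i \<longleftrightarrow> k = ?r"
    using rel_pos_of_rot_index[OF n0 \<open>k < n\<close>, of p] at_i by auto
  moreover have "(p + k) mod n = Suc i mod n \<longleftrightarrow> k = Suc ?r mod n"
    using rel_pos_of_rot_index[OF n0 \<open>k < n\<close>, of p] at_succ
      rel_pos_of_rot_index[OF n0, of "Suc ?r mod n" p] n0 by auto
  moreover have "rot n p C ?r = C i" "rot n p C (Suc ?r mod n) = C (Suc i mod n)"
    unfolding rot_def using at_i at_succ by simp_all
  ultimately show ?thesis
    unfolding interaction_def fun_upd_def by (simp add: rot_def)
qed

lemma S_RL_rooted_reachable:
  assumes n: "2 \<le> n" "n \<le> N" and "reachable n N C C'" and "S_RL_rooted n N (rot n p C)"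
  shows "S_RL_rooted n N (rot n p C')"
  using assms(3) unfolding reachable_def
proof (induction rule: rtranclp_induct)
  case base
  show ?case using assms(4) .
next
  case (step C' C'')
  have n0: "0 < n" using n by simp
  obtain i where "i < n" and C'': "C'' = interaction n N C' i"
    using step.hyps(2) unfolding ring_step_def interaction_def by blast
  have "interaction n N (rot n p C') (rel_pos n p (int i)) k = rot n p C'' k" if "k < n" for k
    using rot_interaction[OF n0 \<open>i < n\<close> that] unfolding C'' by simp
  then show ?case
    by (rule S_RL_rooted_cong[OF n0 _ S_RL_rooted_interaction[OF step.IH n rel_pos_less[OF n0]]])
qed

theorem lemma8:
  fixes n N :: nat
  assumes "2 \<le> n" and "n \<le> N"
  shows "closed_set n N (S_RL n N) \<and> (\<forall>C \<in> S_RL n N. safe n N C)"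
proof -
  have n0: "0 < n" using assms by simp
  have "C' \<in> S_RL n N \<and> (\<forall>i<n. leader (C' i) = leader (C i))"
    if S: "C \<in> S_RL n N" and reach: "reachable n N C C'" for C C'
  proof -
    obtain p where p: "p < n" and rooted: "S_RL_rooted n N (rot n p C)"
      using S S_RL_iff[OF n0] by blast
    have rooted': "S_RL_rooted n N (rot n p C')"
      using S_RL_rooted_reachable[OF assms reach rooted] .
    show ?thesis
      using S_RL_iff[OF n0] p rooted'
        S_RL_rooted_leader_iff[OF n0 p rooted] S_RL_rooted_leader_iff[OF n0 p rooted'] by blast
  qed
  moreover have "C \<in> S_RL n N \<Longrightarrow> card {i. i < n \<and> leader (C i)} = 1" for C
    unfolding S_RL_def by simp
  ultimately show ?thesis
    unfolding closed_set_def safe_def by blast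
qed

end
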